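(* Let $H=\bigcup_i K_{n_i}$ be a disjoint union of complete graphs with all $n_i\ge 1$. Then for every connected graph $G$, $\mathrm{gp}(G\odot H)=\omega((G\odot H)_{\rm SR})$.
   Context: All graphs are finite and simple. For a connected graph $G$, $d_G(u,v)$ is the distance, and a geodesic is a shortest path. A set $S\subseteq V(G)$ is a general position set if no three pairwise distinct vertices of $S$ lie on a common geodesic; $\mathrm{gp}(G)$ is the maximum cardinality of a general position set. A vertex $u$ is maximally distant from $v$ if every neighbor $w$ of $u$ satisfies $d_G(v,w)\le d_G(u,v)$; $u,v$ are mutually maximally distant (MMD) if each is maximally distant from the other. The strong resolving graph $G_{\rm SR}$ has vertex set $V(G)$, distinct vertices adjacent iff MMD in $G$. $\omega$ is the clique number. The corona $G\odot H$, for $V(G)=\{v_1,\dots,v_n\}$, is obtained from the disjoint union of $G$ and $n$ disjoint copies $H_1,\dots,H_n$ of $H$ by joining $v_i$ to every vertex of $H_i$, for each $i$. *)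

theory Defs
  imports Main
begin

definition simple_graph :: "'a set \<Rightarrow> ('a \<Rightarrow> 'a \<Rightarrow> bool) \<Rightarrow> bool" where
  "simple_graph V E \<longleftrightarrow> finite V \<and>
     (\<forall>x y. E x y \<longrightarrow> x \<in> V \<and> y \<in> V \<and> x \<noteq> y \<and> E y x)"

definition walk :: "'a set \<Rightarrow> ('a \<Rightarrow> 'a \<Rightarrow> bool) \<Rightarrow> 'a list \<Rightarrow> bool" where
  "walk V E xs \<longleftrightarrow> xs \<noteq> [] \<and> set xs \<subseteq> V \<and>
     (\<forall>i. Suc i < length xs \<longrightarrow> E (xs ! i) (xs ! Suc i))"

definition connected_graph :: "'a set \<Rightarrow> ('a \<Rightarrow> 'a \<Rightarrow> bool) \<Rightarrow> bool" where
  "connected_graph V E \<longleftrightarrow> V \<noteq> {} \<and>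
     (\<forall>u\<in>V. \<forall>v\<in>V. \<exists>xs. walk V E xs \<and> hd xs = u \<and> last xs = v)"

definition gdist :: "'a set \<Rightarrow> ('a \<Rightarrow> 'a \<Rightarrow> bool) \<Rightarrow> 'a \<Rightarrow> 'a \<Rightarrow> nat" where
  "gdist V E u v = (LEAST n. \<exists>xs. walk V E xs \<and> hd xs = u \<and> last xs = v \<and> length xs = Suc n)"

definition geodesic :: "'a set \<Rightarrow> ('a \<Rightarrow> 'a \<Rightarrow> bool) \<Rightarrow> 'a list \<Rightarrow> bool" where
  "geodesic V E xs \<longleftrightarrow> walk V E xs \<and> length xs = Suc (gdist V E (hd xs) (last xs))"

definition gp_set :: "'a set \<Rightarrow> ('a \<Rightarrow> 'a \<Rightarrow> bool) \<Rightarrow> 'a set \<Rightarrow> bool" where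
  "gp_set V E S \<longleftrightarrow> S \<subseteq> V \<and>
     (\<forall>u\<in>S. \<forall>v\<in>S. \<forall>w\<in>S. u \<noteq> v \<and> u \<noteq> w \<and> v \<noteq> w \<longrightarrow>
        \<not> (\<exists>xs. geodesic V E xs \<and> u \<in> set xs \<and> v \<in> set xs \<and> w \<in> set xs))"

definition gp_number :: "'a set \<Rightarrow> ('a \<Rightarrow> 'a \<Rightarrow> bool) \<Rightarrow> nat" where
  "gp_number V E = Max {card S | S. gp_set V E S}"

definition maximally_distant :: "'a set \<Rightarrow> ('a \<Rightarrow> 'a \<Rightarrow> bool) \<Rightarrow> 'a \<Rightarrow> 'a \<Rightarrow> bool" where
  "maximally_distant V E u v \<longleftrightarrow> u \<in> V \<and> v \<in> V \<and>
     (\<forall>w\<in>V. E u w \<longrightarrow> gdist V E v w \<le> gdist V E u v)"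

definition mutually_maximally_distant :: "'a set \<Rightarrow> ('a \<Rightarrow> 'a \<Rightarrow> bool) \<Rightarrow> 'a \<Rightarrow> 'a \<Rightarrow> bool" where
  "mutually_maximally_distant V E u v \<longleftrightarrow>
     maximally_distant V E u v \<and> maximally_distant V E v u"

text \<open>Edge relation of the strong resolving graph (vertex set is V itself).\<close>
definition strong_resolving_edges :: "'a set \<Rightarrow> ('a \<Rightarrow> 'a \<Rightarrow> bool) \<Rightarrow> 'a \<Rightarrow> 'a \<Rightarrow> bool" where
  "strong_resolving_edges V E u v \<longleftrightarrow> u \<noteq> v \<and> mutually_maximally_distant V E u v"

definition clique :: "'a set \<Rightarrow> ('a \<Rightarrow> 'a \<Rightarrow> bool) \<Rightarrow> 'a set \<Rightarrow> bool" where
  "clique V E S \<longleftrightarrow> S \<subseteq> V \<and> (\<forall>u\<in>S. \<forall>v\<in>S. u \<noteq> v \<longrightarrow> E u v)"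

definition clique_number :: "'a set \<Rightarrow> ('a \<Rightarrow> 'a \<Rightarrow> bool) \<Rightarrow> nat" where
  "clique_number V E = Max {card S | S. clique V E S}"

text \<open>Corona product G \<odot> H: vertex Inl v is v in G, vertex Inr (v, x) is the copy of x
in the copy H_v of H attached to v.\<close>
definition corona_vertices :: "'a set \<Rightarrow> 'b set \<Rightarrow> ('a + 'a \<times> 'b) set" where
  "corona_vertices VG VH = Inl ` VG \<union> Inr ` (VG \<times> VH)"

fun corona_edges :: "('a \<Rightarrow> 'a \<Rightarrow> bool) \<Rightarrow> ('b \<Rightarrow> 'b \<Rightarrow> bool)
    \<Rightarrow> ('a + 'a \<times> 'b) \<Rightarrow> ('a + 'a \<times> 'b) \<Rightarrow> bool" where
  "corona_edges EG EH (Inl a) (Inl b) = EG a b"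
| "corona_edges EG EH (Inr (a, x)) (Inr (b, y)) = (a = b \<and> EH x y)"
| "corona_edges EG EH (Inl a) (Inr (b, y)) = (a = b)"
| "corona_edges EG EH (Inr (a, x)) (Inl b) = (a = b)"

definition disjoint_union_of_complete_graphs :: "'b set \<Rightarrow> ('b \<Rightarrow> 'b \<Rightarrow> bool) \<Rightarrow> bool" where
  "disjoint_union_of_complete_graphs V E \<longleftrightarrow> finite V \<and> V \<noteq> {} \<and>
     (\<exists>P. (\<forall>B\<in>P. B \<noteq> {}) \<and> \<Union>P = V \<and>
          (\<forall>B\<in>P. \<forall>C\<in>P. B \<noteq> C \<longrightarrow> B \<inter> C = {}) \<and>
          (\<forall>x y. E x y \<longleftrightarrow> x \<noteq> y \<and> (\<exists>B\<in>P. x \<in> B \<and> y \<in> B)))"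

end

theory Submission
  imports Defs
begin

text \<open>
  Every vertex of a copy \<open>H\<^sub>v\<close> is simplicial: its neighbours are \<open>v\<close> and its own clique in
  \<open>H\<^sub>v\<close>. A simplicial vertex can only be an end of a geodesic (its two neighbours on it would
  give a shortcut), and it is maximally distant from every other vertex. So the vertices of the
  copies form both a general position set and a clique of the strong resolving graph.

  A base vertex \<open>v\<close> is simplicial only if \<open>G = K\<^sub>1\<close> and \<open>H\<close> is complete, and then \<open>G \<odot> H\<close>
  is complete itself. Otherwise \<open>v\<close> is maximally distant from no vertex: a vertex of \<open>H\<^sub>v\<close> is
  beaten by a neighbour of \<open>v\<close> not adjacent to it, any other vertex by a vertex of \<open>H\<^sub>v\<close>,
  which lies one step behind the cut vertex \<open>v\<close>. Hence no clique of \<open>(G \<odot> H)\<^sub>S\<^sub>R\<close> with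
  two vertices contains \<open>v\<close>. A general position set containing \<open>v\<close> either misses a vertex of
  \<open>H\<^sub>v\<close>, which yields an injection into the vertices of the copies, or contains all of
  \<open>H\<^sub>v\<close> and then lies inside \<open>{v} \<union> H\<^sub>v\<close>, since \<open>v\<close> lies on a geodesic from any other
  vertex to \<open>H\<^sub>v\<close>.
\<close>

lemma walk_nonempty: "walk V E xs \<Longrightarrow> xs \<noteq> []"
  by (simp add: walk_def)

lemma walk_singleton [simp]: "walk V E [a] \<longleftrightarrow> a \<in> V"
  by (auto simp: walk_def)

lemma walk_Cons_Cons [simp]:
  "walk V E (a # b # xs) \<longleftrightarrow> a \<in> V \<and> E a b \<and> walk V E (b # xs)"
proof -
  have "(\<forall>i. Suc i < length (a # b # xs) \<longrightarrow> P i) \<longleftrightarrow>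
      P 0 \<and> (\<forall>i. Suc i < length (b # xs) \<longrightarrow> P (Suc i))" for P
    by (metis All_less_Suc2 Suc_less_eq length_Cons)
  then show ?thesis unfolding walk_def by auto
qed

lemma walk_append:
  "xs \<noteq> [] \<Longrightarrow> ys \<noteq> [] \<Longrightarrow>
    walk V E (xs @ ys) \<longleftrightarrow> walk V E xs \<and> walk V E ys \<and> E (last xs) (hd ys)"
proof (induction xs)
  case Nil
  then show ?case by simp
next
  case (Cons a xs)
  then show ?case by (cases xs; cases ys) auto
qed

lemma walk_join:
  assumes "walk V E p" "walk V E q" "last p = hd q"
  shows "walk V E (p @ tl q)"
proof (cases "tl q")
  case Nil
  then show ?thesis using assms(1) by simp
next
  case (Cons c q')
  then have "walk V E (tl q)" "E (hd q) (hd (tl q))"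
    using assms(2) by (cases q; simp)+
  moreover have "p \<noteq> []" using assms(1) by (rule walk_nonempty)
  ultimately show ?thesis using assms walk_append[of p "tl q"] Cons by simp
qed

lemma last_append_tl: "p \<noteq> [] \<Longrightarrow> last p = hd q \<Longrightarrow> q \<noteq> [] \<Longrightarrow> last (p @ tl q) = last q"
  by (cases q) auto

lemma gdist_less_length: "walk V E xs \<Longrightarrow> gdist V E (hd xs) (last xs) < length xs"
proof -
  assume walk: "walk V E xs"
  then have len: "length xs = Suc (length xs - 1)" by (cases xs) (auto simp: walk_def)
  have "gdist V E (hd xs) (last xs) \<le> length xs - 1"
    unfolding gdist_def by (rule Least_le) (use walk len in blast)
  then show ?thesis using len by linarith
qed

lemma geodesic_length_le:
  "geodesic V E xs \<Longrightarrow> walk V E ys \<Longrightarrow> hd ys = hd xs \<Longrightarrow> last ys = last xs \<Longrightarrow>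
    length xs \<le> length ys"
  using gdist_less_length[of V E ys] by (simp add: geodesic_def)

lemma walk_to_cut_vertex:
  assumes cut: "\<And>a b. E a b \<Longrightarrow> b \<in> A \<Longrightarrow> a \<notin> A \<Longrightarrow> a = c"
  shows "walk V E xs \<Longrightarrow> hd xs \<notin> A \<Longrightarrow> last xs \<in> A \<Longrightarrow>
    \<exists>ys. walk V E ys \<and> hd ys = hd xs \<and> last ys = c \<and> length ys < length xs"
proof (induction xs)
  case Nil
  then show ?case by (simp add: walk_def)
next
  case (Cons a xs)
  show ?case
  proof (cases xs)
    case Nil
    then show ?thesis using Cons.prems by simp
  next
    case xs: (Cons b xs')
    show ?thesis
    proof (cases "b \<in> A")
      case True
      then have "a = c" using cut[of a b] Cons.prems xs by simp
      then show ?thesis using Cons.prems xs by (intro exI[of _ "[a]"]) auto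
    next
      case False
      then obtain ys where ys: "walk V E ys" "hd ys = b" "last ys = c" "length ys < length xs"
        using Cons xs by auto
      then obtain ys' where "ys = b # ys'" by (cases ys) (auto simp: walk_def)
      then show ?thesis using ys Cons.prems xs by (intro exI[of _ "a # ys"]) auto
    qed
  qed
qed

lemma connected_graph_neighbour:
  assumes "connected_graph V E" "u \<in> V" "v \<in> V" "u \<noteq> v"
  obtains w where "w \<in> V" "E u w"
proof -
  obtain xs where xs: "walk V E xs" "hd xs = u" "last xs = v"
    using assms unfolding connected_graph_def by blast
  then obtain b ys where "xs = u # b # ys"
    using assms(4) by (cases xs rule: remdups_adj.cases) (auto simp: walk_def)
  then show ?thesis using that xs(1) by (auto simp: walk_def)
qed

lemma gp_setD:
  "gp_set V E S \<Longrightarrow> geodesic V E xs \<Longrightarrow> u \<in> S \<Longrightarrow> v \<in> S \<Longrightarrow> w \<in> S \<Longrightarrow>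
    u \<in> set xs \<Longrightarrow> v \<in> set xs \<Longrightarrow> w \<in> set xs \<Longrightarrow> u = v \<or> u = w \<or> v = w"
  unfolding gp_set_def by blast

definition simplicial :: "'a set \<Rightarrow> ('a \<Rightarrow> 'a \<Rightarrow> bool) \<Rightarrow> 'a \<Rightarrow> bool" where
  "simplicial V E v \<longleftrightarrow> (\<forall>a\<in>V. \<forall>b\<in>V. E v a \<longrightarrow> E v b \<longrightarrow> a \<noteq> b \<longrightarrow> E a b)"

lemma Max_card_eqI:
  assumes "P T" and le: "\<And>S. P S \<Longrightarrow> card S \<le> card T"
  shows "Max {card S | S. P S} = card T"
proof (rule Max_eqI)
  have "{card S | S. P S} \<subseteq> {..card T}" using le by blast
  then show "finite {card S | S. P S}" by (rule finite_subset) simp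
  show "card T \<in> {card S | S. P S}" using \<open>P T\<close> by blast
qed (use le in blast)

locale sym_graph =
  fixes V :: "'a set" and E :: "'a \<Rightarrow> 'a \<Rightarrow> bool"
  assumes sym: "E a b \<Longrightarrow> E b a"
begin

lemma walk_rev: "walk V E xs \<Longrightarrow> walk V E (rev xs)"
proof (induction xs)
  case Nil
  then show ?case by (simp add: walk_def)
next
  case (Cons a xs)
  show ?case
  proof (cases xs)
    case Nil
    then show ?thesis using Cons.prems by simp
  next
    case xs: (Cons b xs')
    then have "walk V E (rev xs)" "E b a" "a \<in> V"
      using Cons.IH Cons.prems by (auto intro: sym)
    then show ?thesis using walk_append[of "rev xs" "[a]"] xs by simp
  qed
qed

lemma connected_graph_if_all_reach:
  assumes "r \<in> V" and reach: "\<And>a. a \<in> V \<Longrightarrow> \<exists>xs. walk V E xs \<and> hd xs = a \<and> last xs = r"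
  shows "connected_graph V E"
  unfolding connected_graph_def
proof (intro conjI ballI)
  show "V \<noteq> {}" using assms(1) by auto
  fix a b assume "a \<in> V" "b \<in> V"
  then obtain p q where p: "walk V E p" "hd p = a" "last p = r"
    and q: "walk V E q" "hd q = b" "last q = r"
    using reach by blast
  then have "p \<noteq> []" "q \<noteq> []" by (auto simp: walk_def)
  then have "walk V E (p @ tl (rev q))" "hd (p @ tl (rev q)) = a" "last (p @ tl (rev q)) = b"
    using walk_join[OF p(1) walk_rev[OF q(1)]] last_append_tl[of p "rev q"] p q
    by (auto simp: hd_rev last_rev)
  then show "\<exists>xs. walk V E xs \<and> hd xs = a \<and> last xs = b" by blast
qed

lemma simplicial_on_geodesic_is_end:
  assumes geod: "geodesic V E xs" and v: "v \<in> set xs" and simplicial_v: "simplicial V E v"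
  shows "v = hd xs \<or> v = last xs"
proof (rule ccontr)
  assume "\<not> ?thesis"
  then obtain p q where xs: "xs = p @ v # q" and "p \<noteq> []" "q \<noteq> []"
    using split_list[OF v] by fastforce
  then have p: "walk V E p" "E (last p) v" and q: "walk V E q" "E v (hd q)"
    using geod walk_append[of p "v # q"] by (cases q; auto simp: geodesic_def)+
  have in_V: "last p \<in> V" "hd q \<in> V"
    using p q \<open>p \<noteq> []\<close> \<open>q \<noteq> []\<close> by (auto simp: walk_def)
  have "\<exists>ys. walk V E ys \<and> hd ys = hd xs \<and> last ys = last xs \<and> length ys < length xs"
  proof (cases "last p = hd q")
    case True
    then show ?thesis
      using walk_join[OF p(1) q(1)] last_append_tl[of p q] xs \<open>p \<noteq> []\<close> \<open>q \<noteq> []\<close>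
      by (intro exI[of _ "p @ tl q"]) auto
  next
    case False
    then have "E (last p) (hd q)" using simplicial_v p(2) q(2) in_V sym unfolding simplicial_def by blast
    then show ?thesis
      using walk_append[of p q] p(1) q(1) xs \<open>p \<noteq> []\<close> \<open>q \<noteq> []\<close>
      by (intro exI[of _ "p @ q"]) auto
  qed
  then show False using geodesic_length_le[OF geod] by fastforce
qed

lemma gp_set_if_simplicial:
  assumes "S \<subseteq> V" "\<And>v. v \<in> S \<Longrightarrow> simplicial V E v"
  shows "gp_set V E S"
  using assms simplicial_on_geodesic_is_end unfolding gp_set_def by metis

end

locale connected_sym_graph = sym_graph +
  assumes connected: "connected_graph V E"
begin

lemma shortest_walk:
  assumes "a \<in> V" "b \<in> V"
  obtains xs where "walk V E xs" "hd xs = a" "last xs = b" "length xs = Suc (gdist V E a b)"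
proof -
  obtain ys where ys: "walk V E ys" "hd ys = a" "last ys = b"
    using connected assms unfolding connected_graph_def by blast
  then have "\<exists>n xs. walk V E xs \<and> hd xs = a \<and> last xs = b \<and> length xs = Suc n"
    using walk_nonempty[OF ys(1)] by (intro exI[of _ "length ys - 1"] exI[of _ ys]) auto
  then show ?thesis
    using that LeastI_ex[where P = "\<lambda>n. \<exists>xs. walk V E xs \<and> hd xs = a \<and> last xs = b \<and> length xs = Suc n"]
    unfolding gdist_def by blast
qed

lemma gdist_sym:
  assumes "a \<in> V" "b \<in> V"
  shows "gdist V E a b = gdist V E b a"
proof -
  have le: "gdist V E a b \<le> gdist V E b a" if ab: "a \<in> V" "b \<in> V" for a b
  proof -
    obtain xs where xs: "walk V E xs" "hd xs = b" "last xs = a" "length xs = Suc (gdist V E b a)"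
      using shortest_walk[OF ab(2,1)] by blast
    have "xs \<noteq> []" using xs(1) by (rule walk_nonempty)
    then have "gdist V E a b < length (rev xs)"
      using gdist_less_length[OF walk_rev[OF xs(1)]] xs by (simp add: hd_rev last_rev)
    then show ?thesis using xs(4) by simp
  qed
  show ?thesis using le[OF assms] le[OF assms(2,1)] by simp
qed

lemma gdist_le_oneD:
  assumes "a \<in> V" "b \<in> V" "gdist V E a b \<le> 1"
  shows "a = b \<or> E a b"
proof -
  obtain xs where xs: "walk V E xs" "hd xs = a" "last xs = b" "length xs = Suc (gdist V E a b)"
    using shortest_walk[OF assms(1,2)] by blast
  then have "length xs \<in> {1, 2}" using assms(3) by auto
  then consider c where "xs = [c]" | c d where "xs = [c, d]"
    by (auto simp: length_Suc_conv numeral_2_eq_2)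
  then show ?thesis using xs by cases auto
qed

lemma geodesic_through_common_neighbour:
  assumes "a \<in> V" "b \<in> V" "c \<in> V" "a \<noteq> b" "\<not> E a b" "E a c" "E c b"
  shows "geodesic V E [a, c, b]"
proof -
  have "gdist V E a b < 3" using gdist_less_length[of V E "[a, c, b]"] assms by simp
  moreover have "\<not> gdist V E a b \<le> 1" using gdist_le_oneD assms by blast
  ultimately show ?thesis using assms by (simp add: geodesic_def)
qed

lemma simplicial_if_gp_set_contains_neighbours:
  assumes gp: "gp_set V E S" and "c \<in> S" and nbrs: "\<And>w. w \<in> V \<Longrightarrow> E c w \<Longrightarrow> w \<in> S"
  shows "simplicial V E c"
  unfolding simplicial_def
proof (intro ballI impI)
  fix a b assume ab: "a \<in> V" "b \<in> V" "E c a" "E c b" "a \<noteq> b"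
  show "E a b"
  proof (rule ccontr)
    assume non_adj: "\<not> E a b"
    have "c \<in> V" using gp \<open>c \<in> S\<close> by (simp add: gp_set_def subset_iff)
    then have "geodesic V E [a, c, b]"
      using geodesic_through_common_neighbour ab non_adj sym by blast
    moreover have "a \<noteq> c" "b \<noteq> c" using ab non_adj sym by blast+
    moreover have "a \<in> S" "b \<in> S" using nbrs ab by auto
    ultimately show False
      using gp_setD[OF gp, of "[a, c, b]" a c b] \<open>c \<in> S\<close> \<open>a \<noteq> b\<close> by simp
  qed
qed

lemma simplicial_maximally_distant:
  assumes "a \<in> V" "b \<in> V" "a \<noteq> b" and simplicial_a: "simplicial V E a"
  shows "maximally_distant V E a b"
  unfolding maximally_distant_def
proof (intro conjI ballI impI)
  fix w assume w: "w \<in> V" "E a w"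
  obtain p where p: "walk V E p" "hd p = b" "last p = a" "length p = Suc (gdist V E b a)"
    using shortest_walk[OF assms(2,1)] by blast
  have "p \<noteq> []" using p(1) by (rule walk_nonempty)
  define r where "r = butlast p"
  have "p = r @ [a]" using append_butlast_last_id[OF \<open>p \<noteq> []\<close>] p(3) unfolding r_def by simp
  moreover have "r \<noteq> []" using calculation p(2) \<open>a \<noteq> b\<close> by auto
  ultimately have r: "walk V E r" "E (last r) a" "hd r = b" "length r = gdist V E b a"
    using p walk_append[of r "[a]"] by auto
  have "last r \<in> V" using r(1) \<open>r \<noteq> []\<close> by (auto simp: walk_def)
  have "gdist V E b w < Suc (length r)"
  proof (cases "last r = w")
    case True
    then show ?thesis using gdist_less_length[OF r(1)] r(3) by simp
  next
    case False
    then have "E (last r) w" using simplicial_a r(2) w \<open>last r \<in> V\<close> sym unfolding simplicial_def by blast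
    then have "walk V E (r @ [w])" using walk_append[of r "[w]"] r(1) \<open>r \<noteq> []\<close> w by simp
    then show ?thesis using gdist_less_length[of V E "r @ [w]"] r(3) \<open>r \<noteq> []\<close> by simp
  qed
  then show "gdist V E b w \<le> gdist V E a b" using r(4) gdist_sym[OF assms(1,2)] by simp
qed (use assms in auto)

lemma clique_if_simplicial:
  assumes "S \<subseteq> V" "\<And>v. v \<in> S \<Longrightarrow> simplicial V E v"
  shows "clique V (strong_resolving_edges V E) S"
proof -
  have "maximally_distant V E u v" if "u \<in> S" "v \<in> S" "u \<noteq> v" for u v
    using simplicial_maximally_distant assms that by blast
  then show ?thesis using assms(1)
    unfolding clique_def strong_resolving_edges_def mutually_maximally_distant_def by blast
qed

lemma not_maximally_distant_from_simplicial_neighbour: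
  assumes "u \<in> V" "z \<in> V" "E u z" "simplicial V E z" "\<not> simplicial V E u"
  shows "\<not> maximally_distant V E u z"
proof
  assume md: "maximally_distant V E u z"
  obtain a b where ab: "a \<in> V" "b \<in> V" "E u a" "E u b" "a \<noteq> b" "\<not> E a b"
    using assms(5) by (auto simp: simplicial_def)
  have "\<exists>w\<in>V. E u w \<and> w \<noteq> z \<and> \<not> E z w"
  proof (cases "a = z \<or> b = z")
    case True
    then show ?thesis using ab sym by blast
  next
    case False
    then have "\<not> E z a \<or> \<not> E z b" using assms(4) ab unfolding simplicial_def by blast
    then show ?thesis using ab False by blast
  qed
  then obtain w where w: "w \<in> V" "E u w" "w \<noteq> z" "\<not> E z w" by blast
  have "gdist V E z w \<le> gdist V E u z" using md w by (simp add: maximally_distant_def)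
  also have "\<dots> \<le> 1" using gdist_less_length[of V E "[u, z]"] assms by simp
  finally show False using gdist_le_oneD assms(2) w by blast
qed

lemma gdist_through_cut_vertex:
  assumes cut: "\<And>a b. E a b \<Longrightarrow> b \<in> A \<Longrightarrow> a \<notin> A \<Longrightarrow> a = c"
    and "w \<in> V" "w \<notin> A" "z \<in> V" "z \<in> A"
  shows "gdist V E w c < gdist V E w z"
proof -
  obtain xs where xs: "walk V E xs" "hd xs = w" "last xs = z" "length xs = Suc (gdist V E w z)"
    using shortest_walk[OF assms(2,4)] by blast
  have "\<exists>ys. walk V E ys \<and> hd ys = w \<and> last ys = c \<and> length ys < length xs"
    using walk_to_cut_vertex[where E = E and A = A and c = c, OF cut xs(1)] xs assms(3,5) by simp
  then obtain ys where "walk V E ys" "hd ys = w" "last ys = c" "length ys < length xs"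
    by blast
  then show ?thesis using gdist_less_length[of V E ys] xs(4) by simp
qed

lemma geodesic_through_cut_vertex:
  assumes cut: "\<And>a b. E a b \<Longrightarrow> b \<in> A \<Longrightarrow> a \<notin> A \<Longrightarrow> a = c"
    and "w \<in> V" "w \<notin> A" "z \<in> V" "z \<in> A" "c \<in> V" "E c z"
  obtains xs where "geodesic V E xs" "w \<in> set xs" "c \<in> set xs" "z \<in> set xs"
proof -
  obtain ys where ys: "walk V E ys" "hd ys = w" "last ys = c" "length ys = Suc (gdist V E w c)"
    using shortest_walk[OF assms(2,6)] by blast
  have "ys \<noteq> []" using ys(1) by (rule walk_nonempty)
  then have walk: "walk V E (ys @ [z])" using walk_append[of ys "[z]"] ys assms(4,7) by simp
  have "gdist V E w c < gdist V E w z"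
    using cut assms(2-5) by (rule gdist_through_cut_vertex)
  then have "length (ys @ [z]) = Suc (gdist V E w z)"
    using gdist_less_length[OF walk] ys \<open>ys \<noteq> []\<close> by simp
  then have "geodesic V E (ys @ [z])" using walk ys \<open>ys \<noteq> []\<close> by (simp add: geodesic_def)
  moreover have "w \<in> set (ys @ [z])" "c \<in> set (ys @ [z])"
    using ys(2,3) hd_in_set[OF \<open>ys \<noteq> []\<close>] last_in_set[OF \<open>ys \<noteq> []\<close>] by auto
  ultimately show ?thesis by (rule that) simp
qed

lemma gp_number_and_sr_clique_number_eq_card:
  assumes "T \<subseteq> V" "\<And>v. v \<in> T \<Longrightarrow> simplicial V E v"
    and "\<And>S. gp_set V E S \<Longrightarrow> card S \<le> card T"
    and "\<And>K. clique V (strong_resolving_edges V E) K \<Longrightarrow> card K \<le> card T"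
  shows "gp_number V E = card T" "clique_number V (strong_resolving_edges V E) = card T"
proof -
  have "gp_set V E T" using gp_set_if_simplicial assms(1,2) .
  then show "gp_number V E = card T"
    unfolding gp_number_def by (rule Max_card_eqI) (rule assms(3))
  have "clique V (strong_resolving_edges V E) T" using clique_if_simplicial assms(1,2) .
  then show "clique_number V (strong_resolving_edges V E) = card T"
    unfolding clique_number_def by (rule Max_card_eqI) (rule assms(4))
qed

end

lemma disjoint_union_of_complete_graphs_adj_trans:
  assumes "disjoint_union_of_complete_graphs V E" "E x y" "E x z" "y \<noteq> z"
  shows "E y z"
proof -
  obtain P where disj: "\<forall>B\<in>P. \<forall>C\<in>P. B \<noteq> C \<longrightarrow> B \<inter> C = {}"
    and adj: "\<And>x y. E x y \<longleftrightarrow> x \<noteq> y \<and> (\<exists>B\<in>P. x \<in> B \<and> y \<in> B)"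
    using assms(1) unfolding disjoint_union_of_complete_graphs_def by auto
  obtain B C where "B \<in> P" "x \<in> B" "y \<in> B" "C \<in> P" "x \<in> C" "z \<in> C"
    using assms(2,3) adj by meson
  with disj have "B = C" by blast
  then show ?thesis using assms(4) adj \<open>y \<in> B\<close> \<open>z \<in> C\<close> \<open>B \<in> P\<close> by blast
qed

locale corona_of_cliques =
  fixes VG :: "'a set" and EG :: "'a \<Rightarrow> 'a \<Rightarrow> bool"
    and VH :: "'b set" and EH :: "'b \<Rightarrow> 'b \<Rightarrow> bool"
  assumes simple_G: "simple_graph VG EG" and connected_G: "connected_graph VG EG"
    and simple_H: "simple_graph VH EH" and cliques_H: "disjoint_union_of_complete_graphs VH EH"
begin

abbreviation "V \<equiv> corona_vertices VG VH"
abbreviation "E \<equiv> corona_edges EG EH"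
abbreviation copy_vertices :: "('a + 'a \<times> 'b) set" where
  "copy_vertices \<equiv> Inr ` (VG \<times> VH)"

lemma finite_VG: "finite VG" and finite_VH: "finite VH"
  using simple_G simple_H by (auto simp: simple_graph_def)

lemma finite_V: "finite V"
  using finite_VG finite_VH by (simp add: corona_vertices_def)

lemma VH_nonempty: "VH \<noteq> {}"
  using cliques_H by (simp add: disjoint_union_of_complete_graphs_def)

lemma EG_irrefl: "\<not> EG u u"
  using simple_G by (auto simp: simple_graph_def)

lemma corona_edges_sym: "E a b \<Longrightarrow> E b a"
  using simple_G simple_H by (cases a; cases b) (auto simp: simple_graph_def)

sublocale sym_graph V E
  by unfold_locales (rule corona_edges_sym)

lemma walk_map_Inl: "walk VG EG xs \<Longrightarrow> walk V E (map Inl xs)"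
  unfolding walk_def corona_vertices_def by auto

lemma corona_connected: "connected_graph V E"
proof -
  obtain g where "g \<in> VG" using connected_G by (auto simp: connected_graph_def)
  have reach: "\<exists>xs. walk V E xs \<and> hd xs = a \<and> last xs = Inl g" if a_V: "a \<in> V" for a
  proof -
    obtain u where u: "u \<in> VG" and a: "a = Inl u \<or> (\<exists>x\<in>VH. a = Inr (u, x))"
      using a_V unfolding corona_vertices_def by blast
    obtain p where p: "walk VG EG p" "hd p = u" "last p = g"
      using connected_G u \<open>g \<in> VG\<close> unfolding connected_graph_def by blast
    have "p \<noteq> []" using p(1) by (rule walk_nonempty)
    then have q: "walk V E (map Inl p)" "hd (map Inl p) = Inl u" "last (map Inl p) = Inl g"
      using walk_map_Inl[OF p(1)] p by (auto simp: hd_map last_map)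
    show ?thesis
    proof (cases "a = Inl u")
      case True
      then show ?thesis using q by blast
    next
      case False
      then obtain x where x: "x \<in> VH" "a = Inr (u, x)" using a by blast
      then have "walk V E ([a] @ map Inl p)"
        using walk_append[of "[a]" "map Inl p" V E] q(1) p(2) \<open>p \<noteq> []\<close> a_V by (simp add: hd_map)
      moreover have "last ([a] @ map Inl p) = Inl g" using q \<open>p \<noteq> []\<close> by simp
      ultimately show ?thesis by (metis append_Cons append_Nil list.sel(1))
    qed
  qed
  have "Inl g \<in> V" using \<open>g \<in> VG\<close> by (simp add: corona_vertices_def)
  then show ?thesis using reach by (rule connected_graph_if_all_reach)
qed

sublocale connected_sym_graph V E
  by unfold_locales (rule corona_connected)

lemma simplicial_Inr: "simplicial V E (Inr (u, x))"
proof -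
  have "E a b" if "E (Inr (u, x)) a" "E (Inr (u, x)) b" "a \<noteq> b" for a b
    using that
    by (cases a; cases b) (auto dest: disjoint_union_of_complete_graphs_adj_trans[OF cliques_H])
  then show ?thesis by (simp add: simplicial_def)
qed

lemma all_simplicial_if_simplicial_Inl:
  assumes "u \<in> VG" "simplicial V E (Inl u)" "v \<in> V"
  shows "simplicial V E v"
proof -
  have "VG = {u}"
  proof (rule ccontr)
    assume "VG \<noteq> {u}"
    then obtain v where "v \<in> VG" "v \<noteq> u" using assms(1) by blast
    then obtain w where w: "w \<in> VG" "EG u w"
      using connected_graph_neighbour[OF connected_G assms(1)] by metis
    obtain x where "x \<in> VH" using VH_nonempty by blast
    then have "E (Inl w) (Inr (u, x))"
      using assms w EG_irrefl unfolding simplicial_def by (force simp: corona_vertices_def)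
    then show False using w EG_irrefl by auto
  qed
  then show ?thesis using assms simplicial_Inr by (auto simp: corona_vertices_def)
qed

lemma fibre_cut:
  "E a b \<Longrightarrow> b \<in> range (\<lambda>y. Inr (u, y)) \<Longrightarrow> a \<notin> range (\<lambda>y. Inr (u, y)) \<Longrightarrow> a = Inl u"
  by (cases a; cases b) auto

lemma Inl_not_maximally_distant:
  assumes "\<not> simplicial V E (Inl u)" "z \<in> V" "z \<noteq> Inl u"
  shows "\<not> maximally_distant V E (Inl u) z"
proof
  assume md: "maximally_distant V E (Inl u) z"
  then have "Inl u \<in> V" by (simp add: maximally_distant_def)
  then have "u \<in> VG" by (auto simp: corona_vertices_def)
  show False
  proof (cases "z \<in> range (\<lambda>y. Inr (u, y))")
    case True
    then show False
      using not_maximally_distant_from_simplicial_neighbour[of "Inl u" z] simplicial_Inr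
        md assms \<open>Inl u \<in> V\<close> by auto
  next
    case False
    obtain x where "x \<in> VH" using VH_nonempty by blast
    then have x: "Inr (u, x) \<in> V" using \<open>u \<in> VG\<close> by (simp add: corona_vertices_def)
    have "gdist V E z (Inl u) < gdist V E z (Inr (u, x))"
      using assms(2) False x
      by (intro gdist_through_cut_vertex[where A = "range (\<lambda>y. Inr (u, y))", OF fibre_cut]) auto
    also have "\<dots> \<le> gdist V E (Inl u) z" using md x by (simp add: maximally_distant_def)
    also have "\<dots> = gdist V E z (Inl u)" using gdist_sym \<open>Inl u \<in> V\<close> assms(2) by blast
    finally show False by simp
  qed
qed

lemma sr_clique_card_le:
  assumes non_simplicial: "\<forall>u\<in>VG. \<not> simplicial V E (Inl u)" and K: "clique V (strong_resolving_edges V E) K"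
  shows "card K \<le> card copy_vertices"
proof (cases "K \<subseteq> copy_vertices")
  case True
  then show ?thesis using finite_VG finite_VH by (simp add: card_mono)
next
  case False
  have "K \<subseteq> V" using K by (simp add: clique_def)
  obtain k where "k \<in> K" "k \<notin> copy_vertices" using False by blast
  then obtain u where u: "Inl u \<in> K" "u \<in> VG"
    using \<open>K \<subseteq> V\<close> unfolding corona_vertices_def by blast
  have "K \<subseteq> {Inl u}"
  proof
    fix z assume "z \<in> K"
    show "z \<in> {Inl u}"
    proof (rule ccontr)
      assume "z \<notin> {Inl u}"
      then have "maximally_distant V E (Inl u) z"
        using K u(1) \<open>z \<in> K\<close> unfolding clique_def strong_resolving_edges_def
          mutually_maximally_distant_def by blast
      then show False
        using Inl_not_maximally_distant non_simplicial u \<open>z \<in> K\<close> \<open>K \<subseteq> V\<close> \<open>z \<notin> {Inl u}\<close> by blast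
    qed
  qed
  then have "card K \<le> 1" using card_mono[of "{Inl u}" K] by simp
  also have "1 \<le> card copy_vertices"
    using finite_VG finite_VH VH_nonempty u(2) by (auto simp: Suc_le_eq card_gt_0_iff)
  finally show ?thesis .
qed

lemma gp_set_within_closed_fibre:
  assumes gp: "gp_set V E S" and "Inl u \<in> S" "Inr (u, x) \<in> S"
  shows "S \<subseteq> insert (Inl u) (Inr ` ({u} \<times> VH))"
proof
  fix w assume "w \<in> S"
  have "S \<subseteq> V" using gp by (simp add: gp_set_def)
  show "w \<in> insert (Inl u) (Inr ` ({u} \<times> VH))"
  proof (rule ccontr)
    assume outside: "w \<notin> insert (Inl u) (Inr ` ({u} \<times> VH))"
    have "w \<in> V" using \<open>w \<in> S\<close> \<open>S \<subseteq> V\<close> by blast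
    then have "w \<notin> range (\<lambda>y. Inr (u, y))" using outside by (auto simp: corona_vertices_def)
    obtain xs where xs: "geodesic V E xs" "w \<in> set xs" "Inl u \<in> set xs" "Inr (u, x) \<in> set xs"
      by (rule geodesic_through_cut_vertex[where A = "range (\<lambda>y. Inr (u, y))" and c = "Inl u"
              and z = "Inr (u, x)", OF fibre_cut \<open>w \<in> V\<close> \<open>w \<notin> range (\<lambda>y. Inr (u, y))\<close>])
        (use assms \<open>S \<subseteq> V\<close> in auto)
    have "x \<in> VH" using assms(3) \<open>S \<subseteq> V\<close> by (auto simp: corona_vertices_def)
    then show False
      using gp_setD[OF gp xs(1) \<open>w \<in> S\<close> assms(2,3) xs(2-4)] outside by auto
  qed
qed

lemma card_le_copy_vertices_if_closed_fibre_in_gp_set: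
  assumes gp: "gp_set V E S" and u: "Inl u \<in> S" "Inr ` ({u} \<times> VH) \<subseteq> S"
    and non_simplicial: "\<not> simplicial V E (Inl u)"
  shows "card S \<le> card copy_vertices"
proof -
  have "S \<subseteq> V" using gp by (simp add: gp_set_def)
  then have "u \<in> VG" using u by (auto simp: corona_vertices_def)
  have "VG \<noteq> {u}"
  proof
    assume "VG = {u}"
    then have "w \<in> S" if "w \<in> V" "E (Inl u) w" for w
      using that u EG_irrefl by (auto simp: corona_vertices_def)
    then show False
      using simplicial_if_gp_set_contains_neighbours[OF gp u(1)] non_simplicial by blast
  qed
  then obtain v where "v \<in> VG" "v \<noteq> u" using \<open>u \<in> VG\<close> by blast
  then have "card {u, v} \<le> card VG" using \<open>u \<in> VG\<close> finite_VG by (intro card_mono) auto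
  then have "2 \<le> card VG" using \<open>v \<noteq> u\<close> by simp
  obtain x where "x \<in> VH" using VH_nonempty by blast
  have "card S \<le> card (insert (Inl u) (Inr ` ({u} \<times> VH)))"
    using gp_set_within_closed_fibre[OF gp u(1), of x] u(2) \<open>x \<in> VH\<close> finite_VH
    by (intro card_mono) auto
  also have "\<dots> \<le> Suc (card VH)"
    using finite_VH by (simp add: card_insert_if card_image inj_on_def)
  also have "\<dots> \<le> 2 * card VH"
    using VH_nonempty finite_VH by (simp add: Suc_le_eq card_gt_0_iff)
  also have "\<dots> \<le> card VG * card VH"
    using \<open>2 \<le> card VG\<close> by (rule mult_right_mono) simp
  also have "\<dots> = card copy_vertices" by (simp add: card_image card_cartesian_product)
  finally show ?thesis .
qed

lemma card_le_copy_vertices_if_fibres_not_covered: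
  assumes "S \<subseteq> V" and not_covered: "\<And>u. Inl u \<in> S \<Longrightarrow> \<exists>y\<in>VH. Inr (u, y) \<notin> S"
  shows "card S \<le> card copy_vertices"
proof -
  obtain g where g: "\<And>u. Inl u \<in> S \<Longrightarrow> g u \<in> VH \<and> Inr (u, g u) \<notin> S"
    using not_covered by metis
  let ?f = "case_sum (\<lambda>u. Inr (u, g u)) Inr :: 'a + 'a \<times> 'b \<Rightarrow> 'a + 'a \<times> 'b"
  have "inj_on ?f S" using g by (auto simp: inj_on_def split: sum.splits)
  moreover have "?f ` S \<subseteq> copy_vertices"
    using assms(1) g by (auto simp: corona_vertices_def split: sum.splits)
  ultimately show ?thesis using card_inj_on_le finite_VG finite_VH by blast
qed

lemma gp_set_card_le:
  assumes non_simplicial: "\<forall>u\<in>VG. \<not> simplicial V E (Inl u)" and gp: "gp_set V E S"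
  shows "card S \<le> card copy_vertices"
proof (cases "\<exists>u. Inl u \<in> S \<and> Inr ` ({u} \<times> VH) \<subseteq> S")
  case True
  then obtain u where u: "Inl u \<in> S" "Inr ` ({u} \<times> VH) \<subseteq> S" by blast
  moreover have "u \<in> VG" using u(1) gp by (auto simp: gp_set_def corona_vertices_def)
  ultimately show ?thesis
    using card_le_copy_vertices_if_closed_fibre_in_gp_set[OF gp] non_simplicial by blast
next
  case False
  have "S \<subseteq> V" using gp by (simp add: gp_set_def)
  then show ?thesis
    by (rule card_le_copy_vertices_if_fibres_not_covered) (use False in blast)
qed

end

theorem proposition3p2:
  fixes VG :: "'a set" and EG :: "'a \<Rightarrow> 'a \<Rightarrow> bool"
    and VH :: "'b set" and EH :: "'b \<Rightarrow> 'b \<Rightarrow> bool"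
  assumes "simple_graph VG EG" and "connected_graph VG EG"
    and "simple_graph VH EH" and "disjoint_union_of_complete_graphs VH EH"
  shows "gp_number (corona_vertices VG VH) (corona_edges EG EH)
       = clique_number (corona_vertices VG VH)
           (strong_resolving_edges (corona_vertices VG VH) (corona_edges EG EH))"
proof -
  interpret corona_of_cliques VG EG VH EH
    using assms by unfold_locales
  show ?thesis
  proof (cases "\<exists>u\<in>VG. simplicial V E (Inl u)")
    case True
    then have "\<And>v. v \<in> V \<Longrightarrow> simplicial V E v"
      using all_simplicial_if_simplicial_Inl by blast
    moreover have "card S \<le> card V" if "S \<subseteq> V" for S
      using finite_V that by (rule card_mono)
    ultimately show ?thesis
      using gp_number_and_sr_clique_number_eq_card[of V] by (simp add: gp_set_def clique_def)
  next
    case False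
    then have non_simplicial: "\<forall>u\<in>VG. \<not> simplicial V E (Inl u)" by blast
    have "copy_vertices \<subseteq> V" by (auto simp: corona_vertices_def)
    moreover have "\<And>v. v \<in> copy_vertices \<Longrightarrow> simplicial V E v" using simplicial_Inr by blast
    ultimately show ?thesis
      using gp_number_and_sr_clique_number_eq_card gp_set_card_le[OF non_simplicial]
        sr_clique_card_le[OF non_simplicial] by metis
  qed
qed

end
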